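(* Let $\mathcal{G}$ be a GBS graph of groups and $w=a_0^{k_0}y_1a_1^{k_1}\cdots y_na_n^{k_n}$ a $\mathcal{G}$-factorization. If $w$ represents an element of the subgroup $\langle a_0\rangle$ of $F(\mathcal{G})$, then $w=a_0^k$ in $F(\mathcal{G})$ for $$k=\sum_{\nu=0}^n k_\nu\cdot\prod_{\mu=1}^{\nu}\frac{\alpha_\mu}{\beta_\mu},$$ where $\alpha_\mu=\alpha_{y_\mu}$ and $\beta_\mu=\beta_{y_\mu}$ for $1\le\mu\le n$.
   Context: $\mathcal{G}$ consists of a finite connected graph $Y$ (vertices $V(Y)$, edges $E(Y)$, maps $\iota,\tau:E(Y)\to V(Y)$, fixed-point-free involution $y\mapsto\bar y$ with $\iota(\bar y)=\tau(y)$) and integers $\alpha_y,\beta_y\in\mathbb{Z}\setminus\{0\}$ with $\alpha_y=\beta_{\bar y}$. $F(\mathcal{G})$ is the group with generators $V(Y)\cup E(Y)$ and relations $\bar yy=1$, $y\,b^{\beta_y}\bar y=a^{\alpha_y}$ for each $y\in E(Y)$ with $a=\iota(y)$, $b=\tau(y)$. A $\mathcal{G}$-factorization is a word $a_0^{k_0}y_1a_1^{k_1}\cdots y_na_n^{k_n}$ with $y_i\in E(Y)$, $a_i\in V(Y)$, $k_i\in\mathbb{Z}$, $\iota(y_i)=a_{i-1}$, $\tau(y_i)=a_i$ for $1\le i\le n$ and $a_n=a_0$. *)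

theory Defs
  imports Main "HOL.Rat"
begin

definition gbs_graph ::
  "'v set \<Rightarrow> 'e set \<Rightarrow> ('e \<Rightarrow> 'v) \<Rightarrow> ('e \<Rightarrow> 'v) \<Rightarrow> ('e \<Rightarrow> 'e)
   \<Rightarrow> ('e \<Rightarrow> int) \<Rightarrow> ('e \<Rightarrow> int) \<Rightarrow> bool" where
  "gbs_graph V E \<iota> \<tau> bar \<alpha> \<beta> \<longleftrightarrow>
     finite V \<and> V \<noteq> {} \<and> finite E \<and>
     (\<forall>y\<in>E. \<iota> y \<in> V \<and> \<tau> y \<in> V) \<and>
     (\<forall>y\<in>E. bar y \<in> E \<and> bar (bar y) = y \<and> bar y \<noteq> y \<and> \<iota> (bar y) = \<tau> y) \<and>
     (\<forall>u\<in>V. \<forall>v\<in>V. (u, v) \<in> {(\<iota> y, \<tau> y) | y. y \<in> E}\<^sup>*) \<and>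
     (\<forall>y\<in>E. \<alpha> y \<noteq> 0 \<and> \<beta> y \<noteq> 0 \<and> \<alpha> y = \<beta> (bar y))"

text \<open>Words in the generators V \<union> E (vertices Inl, edges Inr); a letter is a
  generator together with a flag, True meaning the inverse of the generator.\<close>

type_synonym ('v, 'e) gword = "(('v + 'e) \<times> bool) list"

definition gpow :: "'g \<Rightarrow> int \<Rightarrow> ('g \<times> bool) list" where
  "gpow g k = (if 0 \<le> k then replicate (nat k) (g, False) else replicate (nat (- k)) (g, True))"

definition gbs_relators ::
  "'e set \<Rightarrow> ('e \<Rightarrow> 'v) \<Rightarrow> ('e \<Rightarrow> 'v) \<Rightarrow> ('e \<Rightarrow> 'e)
   \<Rightarrow> ('e \<Rightarrow> int) \<Rightarrow> ('e \<Rightarrow> int) \<Rightarrow> ('v, 'e) gword set" where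
  "gbs_relators E \<iota> \<tau> bar \<alpha> \<beta> =
     {[(Inr (bar y), False), (Inr y, False)] | y. y \<in> E} \<union>
     {[(Inr y, False)] @ gpow (Inl (\<tau> y)) (\<beta> y) @ [(Inr (bar y), False)]
        @ gpow (Inl (\<iota> y)) (- \<alpha> y) | y. y \<in> E}"

inductive pres_eq :: "('g \<times> bool) list set \<Rightarrow> ('g \<times> bool) list \<Rightarrow> ('g \<times> bool) list \<Rightarrow> bool"
  for R where
  refl: "pres_eq R u u"
| sym: "pres_eq R u v \<Longrightarrow> pres_eq R v u"
| trans: "pres_eq R u v \<Longrightarrow> pres_eq R v w \<Longrightarrow> pres_eq R u w"
| ctxt: "pres_eq R u v \<Longrightarrow> pres_eq R (x @ u @ z) (x @ v @ z)"
| cancel: "pres_eq R [(g, b), (g, \<not> b)] []"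
| rel: "r \<in> R \<Longrightarrow> pres_eq R r []"

definition F_eq ::
  "'e set \<Rightarrow> ('e \<Rightarrow> 'v) \<Rightarrow> ('e \<Rightarrow> 'v) \<Rightarrow> ('e \<Rightarrow> 'e)
   \<Rightarrow> ('e \<Rightarrow> int) \<Rightarrow> ('e \<Rightarrow> int) \<Rightarrow> ('v, 'e) gword \<Rightarrow> ('v, 'e) gword \<Rightarrow> bool" where
  "F_eq E \<iota> \<tau> bar \<alpha> \<beta> = pres_eq (gbs_relators E \<iota> \<tau> bar \<alpha> \<beta>)"

text \<open>A G-factorization a_0^{k_0} y_1 a_1^{k_1} ... y_n a_n^{k_n}, given by
  n, a :: nat => vertex (indices 0..n), y :: nat => edge (indices 1..n),
  k :: nat => int (indices 0..n).\<close>

definition is_factorization ::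
  "'v set \<Rightarrow> 'e set \<Rightarrow> ('e \<Rightarrow> 'v) \<Rightarrow> ('e \<Rightarrow> 'v) \<Rightarrow> nat \<Rightarrow> (nat \<Rightarrow> 'v) \<Rightarrow> (nat \<Rightarrow> 'e) \<Rightarrow> bool" where
  "is_factorization V E \<iota> \<tau> n a y \<longleftrightarrow>
     (\<forall>i\<le>n. a i \<in> V) \<and>
     (\<forall>i\<in>{1..n}. y i \<in> E \<and> \<iota> (y i) = a (i - 1) \<and> \<tau> (y i) = a i) \<and>
     a n = a 0"

definition fact_word :: "nat \<Rightarrow> (nat \<Rightarrow> 'v) \<Rightarrow> (nat \<Rightarrow> 'e) \<Rightarrow> (nat \<Rightarrow> int) \<Rightarrow> ('v, 'e) gword" where
  "fact_word n a y k =
     gpow (Inl (a 0)) (k 0) @ concat (map (\<lambda>i. (Inr (y i), False) # gpow (Inl (a i)) (k i)) [1..<Suc n])"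

end

theory Submission
  imports Defs
begin

text \<open>Letting every vertex generator act on \<open>\<rat>\<close> as the translation \<open>x \<mapsto> x + 1\<close> and every
  edge \<open>y\<close> as the dilation \<open>x \<mapsto> (\<alpha>\<^sub>y / \<beta>\<^sub>y) x\<close> respects the defining relations, so it
  defines an action of \<open>F(\<G>)\<close> on \<open>\<rat>\<close> by affine maps. The factorization \<open>w\<close> acts as
  \<open>x \<mapsto> (\<Prod>\<^sub>\<mu> \<alpha>\<^sub>\<mu>/\<beta>\<^sub>\<mu>) x + k\<close> with \<open>k\<close> the stated sum, while \<open>a\<^sub>0\<^sup>m\<close> acts as \<open>x \<mapsto> x + m\<close>.
  If \<open>w = a\<^sub>0\<^sup>m\<close>, evaluating both at \<open>0\<close> gives \<open>k = m\<close>, which is an integer.\<close>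

definition word_action :: "('g \<Rightarrow> 'a \<Rightarrow> 'a) \<Rightarrow> ('g \<times> bool) list \<Rightarrow> 'a \<Rightarrow> 'a" where
  "word_action \<phi> w = foldr (\<lambda>(g, b) f. (if b then inv (\<phi> g) else \<phi> g) \<circ> f) w id"

lemma word_action_Nil [simp]: "word_action \<phi> [] = id"
  by (simp add: word_action_def)

lemma word_action_Cons [simp]:
  "word_action \<phi> ((g, b) # w) = (if b then inv (\<phi> g) else \<phi> g) \<circ> word_action \<phi> w"
  by (simp add: word_action_def)

lemma word_action_append: "word_action \<phi> (u @ v) = word_action \<phi> u \<circ> word_action \<phi> v"
  by (induction u) auto

lemma word_action_replicate:
  "word_action \<phi> (replicate m (g, b)) = (if b then inv (\<phi> g) else \<phi> g) ^^ m"
  by (induction m) auto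

lemma pres_eq_word_action:
  assumes "pres_eq R u v"
    and "\<And>g. bij (\<phi> g)"
    and "\<And>r. r \<in> R \<Longrightarrow> word_action \<phi> r = id"
  shows "word_action \<phi> u = word_action \<phi> v"
  using assms(1)
proof (induction rule: pres_eq.induct)
  case (ctxt u v x z)
  then show ?case by (simp add: word_action_append)
next
  case (cancel g b)
  have "inv (\<phi> g) \<circ> \<phi> g = id" "\<phi> g \<circ> inv (\<phi> g) = id"
    using assms(2)[of g] by (simp_all add: bij_def inj_iff surj_iff)
  then show ?case by (cases b) auto
qed (auto simp: assms(3))

text \<open>A zero label occurs only off the graph; there the guard still makes the edge act
  bijectively, which cancellation of inverse letters requires for every generator.\<close>

definition edge_ratio :: "('e \<Rightarrow> int) \<Rightarrow> ('e \<Rightarrow> int) \<Rightarrow> 'e \<Rightarrow> 'a::field_char_0" where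
  "edge_ratio \<alpha> \<beta> e = (if \<alpha> e = 0 \<or> \<beta> e = 0 then 1 else of_int (\<alpha> e) / of_int (\<beta> e))"

definition gbs_affine_action ::
  "('e \<Rightarrow> int) \<Rightarrow> ('e \<Rightarrow> int) \<Rightarrow> 'v + 'e \<Rightarrow> 'a \<Rightarrow> 'a::field_char_0" where
  "gbs_affine_action \<alpha> \<beta> = case_sum (\<lambda>v x. x + 1) (\<lambda>e x. edge_ratio \<alpha> \<beta> e * x)"

lemma gbs_affine_action_simps [simp]:
  "gbs_affine_action \<alpha> \<beta> (Inl v) = (\<lambda>x. x + 1)"
  "gbs_affine_action \<alpha> \<beta> (Inr e) = (\<lambda>x. edge_ratio \<alpha> \<beta> e * x)"
  by (simp_all add: gbs_affine_action_def)

lemma edge_ratio_nonzero: "edge_ratio \<alpha> \<beta> e \<noteq> 0"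
  by (simp add: edge_ratio_def)

lemma edge_ratio_eq:
  assumes "gbs_graph V E \<iota> \<tau> bar \<alpha> \<beta>" and "e \<in> E"
  shows "edge_ratio \<alpha> \<beta> e = of_int (\<alpha> e) / of_int (\<beta> e)"
  using assms by (simp add: gbs_graph_def edge_ratio_def)

lemma inv_translation: "inv (\<lambda>x. x + c) = (\<lambda>x::'a::ab_group_add. x - c)"
  by (rule inv_unique_comp) auto

lemma bij_gbs_affine_action: "bij (gbs_affine_action \<alpha> \<beta> g)"
proof (cases g)
  case (Inl v)
  have "bij (\<lambda>x::'a. x + 1)"
    by (rule o_bij[of "\<lambda>x. x - 1"]) auto
  then show ?thesis by (simp add: Inl)
next
  case (Inr e)
  have "bij (\<lambda>x::'a. edge_ratio \<alpha> \<beta> e * x)"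
    by (rule o_bij[of "\<lambda>x. x / edge_ratio \<alpha> \<beta> e"]) (auto simp: edge_ratio_nonzero)
  then show ?thesis by (simp add: Inr)
qed

lemma funpow_translation: "(\<lambda>x. x + c) ^^ m = (\<lambda>x::'a::comm_ring_1. x + of_nat m * c)"
  by (induction m) (auto simp: algebra_simps)

lemma word_action_gpow_vertex:
  "word_action (gbs_affine_action \<alpha> \<beta>) (gpow (Inl v) k) = (\<lambda>x::'a::field_char_0. x + of_int k)"
proof (cases "0 \<le> k")
  case True
  then show ?thesis
    by (simp add: gpow_def word_action_replicate funpow_translation)
next
  case False
  have "inv (\<lambda>x::'a. x + 1) ^^ nat (- k) = (\<lambda>x. x + - 1) ^^ nat (- k)"
    by (simp add: inv_translation)
  also have "\<dots> = (\<lambda>x. x + of_int k)"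
    unfolding funpow_translation using False by simp
  finally show ?thesis
    using False by (simp add: gpow_def word_action_replicate)
qed

lemma gbs_relator_acts_trivially:
  assumes "gbs_graph V E \<iota> \<tau> bar \<alpha> \<beta>" and "r \<in> gbs_relators E \<iota> \<tau> bar \<alpha> \<beta>"
  shows "word_action (gbs_affine_action \<alpha> \<beta>) r = (id :: 'a::field_char_0 \<Rightarrow> 'a)"
proof -
  obtain y where y: "y \<in> E" and r: "r = [(Inr (bar y), False), (Inr y, False)] \<or>
      r = [(Inr y, False)] @ gpow (Inl (\<tau> y)) (\<beta> y) @ [(Inr (bar y), False)]
        @ gpow (Inl (\<iota> y)) (- \<alpha> y)"
    using assms(2) unfolding gbs_relators_def by blast
  have "bar y \<in> E" "bar (bar y) = y"
    using assms(1) y unfolding gbs_graph_def by auto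
  then have nonzero: "\<alpha> y \<noteq> 0" "\<beta> y \<noteq> 0" and bar_labels: "\<alpha> (bar y) = \<beta> y" "\<beta> (bar y) = \<alpha> y"
    using assms(1) y unfolding gbs_graph_def by metis+
  have "edge_ratio \<alpha> \<beta> y * edge_ratio \<alpha> \<beta> (bar y) = (1 :: 'a)"
    and "edge_ratio \<alpha> \<beta> y * of_int (\<beta> y) = (of_int (\<alpha> y) :: 'a)"
    using nonzero bar_labels by (simp_all add: edge_ratio_def)
  with r show ?thesis
    by (auto simp: word_action_append word_action_gpow_vertex fun_eq_iff algebra_simps)
qed

lemma F_eq_affine_action_eq:
  assumes "gbs_graph V E \<iota> \<tau> bar \<alpha> \<beta>" and "F_eq E \<iota> \<tau> bar \<alpha> \<beta> u v"
  shows "word_action (gbs_affine_action \<alpha> \<beta>) u = (word_action (gbs_affine_action \<alpha> \<beta>) v :: 'a::field_char_0 \<Rightarrow> 'a)"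
  using assms(2) unfolding F_eq_def
  by (rule pres_eq_word_action[OF _ bij_gbs_affine_action gbs_relator_acts_trivially[OF assms(1)]])

lemma word_action_fact_word:
  "word_action (gbs_affine_action \<alpha> \<beta>) (fact_word n a y k) x =
     (\<Prod>\<mu>=1..n. edge_ratio \<alpha> \<beta> (y \<mu>)) * x
       + (\<Sum>\<nu>=0..n. of_int (k \<nu>) * (\<Prod>\<mu>=1..\<nu>. edge_ratio \<alpha> \<beta> (y \<mu>)) :: 'a::field_char_0)"
proof (induction n arbitrary: x)
  case 0
  then show ?case by (simp add: fact_word_def word_action_gpow_vertex)
next
  case (Suc n)
  have "fact_word (Suc n) a y k =
      fact_word n a y k @ (Inr (y (Suc n)), False) # gpow (Inl (a (Suc n))) (k (Suc n))"
    by (simp add: fact_word_def)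
  then show ?case
    by (simp add: Suc word_action_append word_action_gpow_vertex algebra_simps)
qed

theorem lemma3p1:
  fixes V :: "'v set" and E :: "'e set"
    and \<iota> \<tau> :: "'e \<Rightarrow> 'v" and bar :: "'e \<Rightarrow> 'e" and \<alpha> \<beta> :: "'e \<Rightarrow> int"
    and n :: nat and a :: "nat \<Rightarrow> 'v" and y :: "nat \<Rightarrow> 'e" and k :: "nat \<Rightarrow> int"
  assumes "gbs_graph V E \<iota> \<tau> bar \<alpha> \<beta>"
    and "is_factorization V E \<iota> \<tau> n a y"
    and "\<exists>m::int. F_eq E \<iota> \<tau> bar \<alpha> \<beta> (fact_word n a y k) (gpow (Inl (a 0)) m)"
  shows "\<exists>K::int. of_int K = (\<Sum>\<nu>=0..n. of_int (k \<nu>) *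
              (\<Prod>\<mu>=1..\<nu>. of_int (\<alpha> (y \<mu>)) / of_int (\<beta> (y \<mu>))) :: rat)
           \<and> F_eq E \<iota> \<tau> bar \<alpha> \<beta> (fact_word n a y k) (gpow (Inl (a 0)) K)"
proof -
  obtain m where m: "F_eq E \<iota> \<tau> bar \<alpha> \<beta> (fact_word n a y k) (gpow (Inl (a 0)) m)"
    using assms(3) by blast
  let ?act = "word_action (gbs_affine_action \<alpha> \<beta>) :: _ \<Rightarrow> rat \<Rightarrow> rat"
  have "?act (fact_word n a y k) 0 = ?act (gpow (Inl (a 0)) m) 0"
    using F_eq_affine_action_eq[where 'a = rat, OF assms(1) m] by (rule fun_cong)
  then have "(of_int m :: rat) = (\<Sum>\<nu>=0..n. of_int (k \<nu>) * (\<Prod>\<mu>=1..\<nu>. edge_ratio \<alpha> \<beta> (y \<mu>)))"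
    by (simp add: word_action_fact_word word_action_gpow_vertex)
  also have "\<dots> = (\<Sum>\<nu>=0..n. of_int (k \<nu>) * (\<Prod>\<mu>=1..\<nu>. of_int (\<alpha> (y \<mu>)) / of_int (\<beta> (y \<mu>))))"
  proof (intro sum.cong refl arg_cong2[where f = "(*)"] prod.cong)
    fix \<nu> \<mu> assume "\<nu> \<in> {0..n}" "\<mu> \<in> {1..\<nu>}"
    then have "y \<mu> \<in> E"
      using assms(2) by (auto simp: is_factorization_def)
    then show "edge_ratio \<alpha> \<beta> (y \<mu>) = of_int (\<alpha> (y \<mu>)) / of_int (\<beta> (y \<mu>))"
      by (rule edge_ratio_eq[OF assms(1)])
  qed simp_all
  finally show ?thesis
    using m by blast
qed

end
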